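(* For a hermitian $n\times n$ matrix $A$, let $\mathbb 1_{A,q}=1$ if $A$ has signature $(n-q,q)$ (i.e. $n-q$ positive and $q$ negative eigenvalues, hence nondegenerate) and $\mathbb 1_{A,q}=0$ otherwise. Then for all hermitian $n\times n$ matrices $A,B$ and all $q$, $$\big|\mathbb 1_{A,q}\det A-\mathbb 1_{B,q}\det B\big|\le\|A-B\|\sum_{0\le i\le n-1}\|A\|^i\|B\|^{n-1-i},$$ where $\|\cdot\|$ is the operator norm. *)

theory Defs
  imports "Jordan_Normal_Form.Char_Poly" "HOL-Computational_Algebra.Polynomial"
begin

definition hermitian_mat :: "nat \<Rightarrow> complex mat \<Rightarrow> bool" where
  "hermitian_mat n A \<longleftrightarrow> A \<in> carrier_mat n n \<and>
     (\<forall>i<n. \<forall>j<n. A $$ (i,j) = cnj (A $$ (j,i)))"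

definition vnorm :: "complex vec \<Rightarrow> real" where
  "vnorm v = sqrt (\<Sum>i<dim_vec v. (cmod (v $ i))\<^sup>2)"

definition op_norm :: "complex mat \<Rightarrow> real" where
  "op_norm A = Sup {vnorm (A *\<^sub>v v) | v. v \<in> carrier_vec (dim_col A) \<and> vnorm v \<le> 1}"

definition pos_eig_count :: "complex mat \<Rightarrow> nat" where
  "pos_eig_count A = (\<Sum>x\<in>{x. poly (char_poly A) x = 0 \<and> Im x = 0 \<and> Re x > 0}.
      order x (char_poly A))"

definition neg_eig_count :: "complex mat \<Rightarrow> nat" where
  "neg_eig_count A = (\<Sum>x\<in>{x. poly (char_poly A) x = 0 \<and> Im x = 0 \<and> Re x < 0}.
      order x (char_poly A))"

definition sig_ind :: "nat \<Rightarrow> complex mat \<Rightarrow> nat \<Rightarrow> real" where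
  "sig_ind n A q = (if q \<le> n \<and> pos_eig_count A = n - q \<and> neg_eig_count A = q then 1 else 0)"

end

theory Submission
  imports Defs "Jordan_Normal_Form.Schur_Decomposition" "HOL-Analysis.L2_Norm"
    "HOL-Computational_Algebra.Fundamental_Theorem_Algebra"
begin

(* By the spectral theorem A and B are unitarily diagonalizable with real
   eigenvalues a_0 \<ge> ... \<ge> a_{n-1} and b_0 \<ge> ... \<ge> b_{n-1}.  Then det A = \<Prod> a_i,
   |a_i| \<le> \<parallel>A\<parallel>, the signature of A is read off from the signs of the a_i, and Weyl's
   perturbation inequality gives |a_i - b_i| \<le> \<parallel>A - B\<parallel> =: d.  If the indicators agree,
   a telescoping estimate bounds |\<Prod> a_i - \<Prod> b_i|.  If they differ, some index k must have
   |a_k|, |b_k| \<le> d (otherwise all signs agree), and then |\<Prod> a_i| \<le> d \<parallel>A\<parallel>^(n-1) or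
   |\<Prod> b_i| \<le> d \<parallel>B\<parallel>^(n-1), each a single term of the sum. *)

definition ctrans :: "complex mat \<Rightarrow> complex mat" where
  "ctrans M = mat (dim_col M) (dim_row M) (\<lambda>(i,j). cnj (M $$ (j,i)))"

definition cinner :: "complex vec \<Rightarrow> complex vec \<Rightarrow> complex" where
  "cinner x y = (\<Sum>i<dim_vec x. x $ i * cnj (y $ i))"

lemma ctrans_carrier[simp]: "M \<in> carrier_mat r c \<Longrightarrow> ctrans M \<in> carrier_mat c r"
  by (auto simp: ctrans_def)

lemma ctrans_dims[simp]: "dim_row (ctrans M) = dim_col M" "dim_col (ctrans M) = dim_row M"
  by (auto simp: ctrans_def)

lemma ctrans_index[simp]:
  "i < dim_col M \<Longrightarrow> j < dim_row M \<Longrightarrow> ctrans M $$ (i,j) = cnj (M $$ (j,i))"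
  by (auto simp: ctrans_def)

lemma ctrans_ctrans[simp]: "ctrans (ctrans M) = M"
  by (rule eq_matI) (auto simp: ctrans_def)

lemma ctrans_mult:
  assumes "A \<in> carrier_mat r k" "B \<in> carrier_mat k c"
  shows "ctrans (A * B) = ctrans B * ctrans A"
proof (rule eq_matI)
  fix i j assume "i < dim_row (ctrans B * ctrans A)" "j < dim_col (ctrans B * ctrans A)"
  then have i: "i < c" and j: "j < r" using assms by auto
  have "ctrans (A * B) $$ (i,j) = cnj (\<Sum>l\<in>{0..<k}. A $$ (j,l) * B $$ (l,i))"
    using assms i j by (simp add: ctrans_def scalar_prod_def)
  also have "\<dots> = (\<Sum>l\<in>{0..<k}. cnj (B $$ (l,i)) * cnj (A $$ (j,l)))"
    by (simp add: mult.commute)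
  also have "\<dots> = (ctrans B * ctrans A) $$ (i,j)"
    using assms i j by (simp add: ctrans_def scalar_prod_def)
  finally show "ctrans (A * B) $$ (i,j) = (ctrans B * ctrans A) $$ (i,j)" .
qed (use assms in auto)

lemma hermitian_iff_ctrans: "hermitian_mat n A \<longleftrightarrow> A \<in> carrier_mat n n \<and> ctrans A = A"
proof
  assume h: "hermitian_mat n A"
  then have A: "A \<in> carrier_mat n n" by (simp add: hermitian_mat_def)
  have "ctrans A = A"
  proof (rule eq_matI)
    fix i j assume "i < dim_row A" "j < dim_col A"
    then show "ctrans A $$ (i,j) = A $$ (i,j)"
      using h A unfolding hermitian_mat_def by (metis complex_cnj_cnj ctrans_index carrier_matD)
  qed (use A in simp_all)
  with A show "A \<in> carrier_mat n n \<and> ctrans A = A" by blast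
next
  assume "A \<in> carrier_mat n n \<and> ctrans A = A"
  then show "hermitian_mat n A" unfolding hermitian_mat_def
    by (metis carrier_matD ctrans_index)
qed

lemma cinner_mult:
  assumes A: "A \<in> carrier_mat r c" and x: "x \<in> carrier_vec c" and y: "y \<in> carrier_vec r"
  shows "cinner (A *\<^sub>v x) y = cinner x (ctrans A *\<^sub>v y)"
proof -
  have "cinner (A *\<^sub>v x) y = (\<Sum>i<r. (\<Sum>j\<in>{0..<c}. A $$ (i,j) * x $ j) * cnj (y $ i))"
    using A x y by (simp add: cinner_def scalar_prod_def)
  also have "\<dots> = (\<Sum>i<r. \<Sum>j<c. A $$ (i,j) * x $ j * cnj (y $ i))"
    by (simp add: sum_distrib_right atLeast0LessThan)
  also have "\<dots> = (\<Sum>j<c. \<Sum>i<r. A $$ (i,j) * x $ j * cnj (y $ i))"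
    by (rule sum.swap)
  also have "\<dots> = (\<Sum>j<c. x $ j * cnj (\<Sum>i\<in>{0..<r}. cnj (A $$ (i,j)) * y $ i))"
    by (simp add: sum_distrib_left atLeast0LessThan mult_ac)
  also have "\<dots> = cinner x (ctrans A *\<^sub>v y)"
    using A x y by (simp add: cinner_def scalar_prod_def)
  finally show ?thesis .
qed

lemma cinner_smult_left: "cinner (c \<cdot>\<^sub>v x) y = c * cinner x y"
  unfolding cinner_def by (simp add: sum_distrib_left mult.assoc)

lemma cinner_smult_right: "dim_vec y = dim_vec x \<Longrightarrow> cinner x (c \<cdot>\<^sub>v y) = cnj c * cinner x y"
  unfolding cinner_def by (simp add: sum_distrib_left mult_ac)

lemma cinner_minus_left: "dim_vec u = dim_vec w \<Longrightarrow> cinner (u - w) y = cinner u y - cinner w y"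
  unfolding cinner_def by (simp add: sum_subtractf[symmetric] algebra_simps)

(* The library's conjugate scalar product, used by Gram-Schmidt, is the same inner product. *)
lemma cinner_eq_cscalar_prod: "dim_vec y = dim_vec x \<Longrightarrow> cinner x y = x \<bullet>c y"
  unfolding cinner_def scalar_prod_def by (simp add: atLeast0LessThan)

definition unitary :: "nat \<Rightarrow> complex mat \<Rightarrow> bool" where
  "unitary n U \<longleftrightarrow> U \<in> carrier_mat n n \<and> ctrans U * U = 1\<^sub>m n"

lemma unitary_right_inverse:
  assumes "unitary n U" shows "U * ctrans U = 1\<^sub>m n"
proof -
  have U: "U \<in> carrier_mat n n" and u: "ctrans U * U = 1\<^sub>m n" using assms by (auto simp: unitary_def)
  show ?thesis using mat_mult_left_right_inverse[OF ctrans_carrier[OF U] U u] .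
qed

lemma unitary_mult:
  assumes "unitary n U" "unitary n V" shows "unitary n (U * V)"
proof -
  have U: "U \<in> carrier_mat n n" and u: "ctrans U * U = 1\<^sub>m n"
    and V: "V \<in> carrier_mat n n" and v: "ctrans V * V = 1\<^sub>m n"
    using assms by (auto simp: unitary_def)
  have "ctrans (U * V) * (U * V) = ctrans V * ((ctrans U * U) * V)"
    using U V by (simp add: ctrans_mult[OF U V] assoc_mult_mat[of _ n n _ n _ n])
  also have "\<dots> = 1\<^sub>m n" using u v V by simp
  finally show ?thesis using U V by (simp add: unitary_def)
qed

lemma unitary_cinner:
  assumes U: "unitary n U" and x: "x \<in> carrier_vec n" and y: "y \<in> carrier_vec n"
  shows "cinner (U *\<^sub>v x) (U *\<^sub>v y) = cinner x y"
proof -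
  have Uc: "U \<in> carrier_mat n n" and u: "ctrans U * U = 1\<^sub>m n" using U by (auto simp: unitary_def)
  have "cinner (U *\<^sub>v x) (U *\<^sub>v y) = cinner x (ctrans U *\<^sub>v (U *\<^sub>v y))"
    using cinner_mult[OF Uc x] Uc y by simp
  also have "ctrans U *\<^sub>v (U *\<^sub>v y) = (ctrans U * U) *\<^sub>v y"
    using assoc_mult_mat_vec[OF ctrans_carrier[OF Uc] Uc y] by simp
  also have "\<dots> = y" using u y by simp
  finally show ?thesis .
qed

lemma unitary_mat_of_cols:
  assumes len: "length us = m" and us: "set us \<subseteq> carrier_vec m"
    and orthonormal: "\<And>i j. i < m \<Longrightarrow> j < m \<Longrightarrow> cinner (us ! j) (us ! i) = (if i = j then 1 else 0)"
  shows "unitary m (mat_of_cols m us)"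
proof -
  let ?W = "mat_of_cols m us"
  have Wc: "?W \<in> carrier_mat m m" using mat_of_cols_carrier(1)[of m us] len by simp
  have "ctrans ?W * ?W = 1\<^sub>m m"
  proof (rule eq_matI)
    fix i j assume "i < dim_row (1\<^sub>m m :: complex mat)" "j < dim_col (1\<^sub>m m :: complex mat)"
    then have i: "i < m" and j: "j < m" by auto
    have "(ctrans ?W * ?W) $$ (i,j) = (\<Sum>k\<in>{0..<m}. cnj (?W $$ (k,i)) * ?W $$ (k,j))"
      using carrier_matD[OF Wc] i j by (simp add: scalar_prod_def)
    also have "\<dots> = (\<Sum>k<m. us ! j $ k * cnj (us ! i $ k))"
      using i j len by (intro sum.cong) (auto simp: mat_of_cols_def mult.commute)
    also have "\<dots> = cinner (us ! j) (us ! i)"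
      unfolding cinner_def using us len j by (metis carrier_vecD nth_mem subsetD)
    also have "\<dots> = 1\<^sub>m m $$ (i,j)" using orthonormal[OF i j] i j by simp
    finally show "(ctrans ?W * ?W) $$ (i,j) = 1\<^sub>m m $$ (i,j)" .
  qed (use Wc in auto)
  with Wc show ?thesis by (simp add: unitary_def)
qed

lemma hermitian_unitary_conj:
  assumes h: "hermitian_mat n A" and W: "unitary n W"
  shows "hermitian_mat n (ctrans W * A * W)"
proof -
  have A: "A \<in> carrier_mat n n" and aA: "ctrans A = A" using h hermitian_iff_ctrans by auto
  have Wc: "W \<in> carrier_mat n n" using W by (simp add: unitary_def)
  have WA: "ctrans W * A \<in> carrier_mat n n" using mult_carrier_mat[OF ctrans_carrier[OF Wc] A] .
  have "ctrans (ctrans W * A * W) = ctrans W * ctrans (ctrans W * A)"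
    using ctrans_mult[OF WA Wc] .
  also have "ctrans (ctrans W * A) = A * W" using ctrans_mult[OF ctrans_carrier[OF Wc] A] aA by simp
  also have "ctrans W * (A * W) = ctrans W * A * W"
    using assoc_mult_mat[OF ctrans_carrier[OF Wc] A Wc] by simp
  finally show ?thesis unfolding hermitian_iff_ctrans using mult_carrier_mat[OF WA Wc] by blast
qed

lemma vnorm_nonneg: "vnorm x \<ge> 0"
  by (simp add: vnorm_def sum_nonneg)

lemma vnorm_sq: "(vnorm v)^2 = (\<Sum>i<dim_vec v. (cmod (v $ i))^2)"
  unfolding vnorm_def by (simp add: sum_nonneg)

lemma vnorm_L2_set: "vnorm x = L2_set (\<lambda>i. cmod (x $ i)) {..<dim_vec x}"
  by (simp add: vnorm_def L2_set_def)

lemma vnorm_zero_iff: "vnorm x = 0 \<longleftrightarrow> x = 0\<^sub>v (dim_vec x)"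
proof
  assume "vnorm x = 0"
  then have "(\<Sum>i<dim_vec x. (cmod (x $ i))^2) = 0" unfolding vnorm_def by simp
  then have "\<forall>i\<in>{..<dim_vec x}. (cmod (x $ i))^2 = 0"
    by (subst (asm) sum_nonneg_eq_0_iff) auto
  then show "x = 0\<^sub>v (dim_vec x)" by (intro eq_vecI) auto
next
  assume "x = 0\<^sub>v (dim_vec x)"
  then have "\<And>i. i < dim_vec x \<Longrightarrow> x $ i = 0" by (metis index_zero_vec(1))
  then show "vnorm x = 0" by (simp add: vnorm_def)
qed

lemma cinner_self: "cinner x x = complex_of_real ((vnorm x)^2)"
proof -
  have "cinner x x = (\<Sum>i<dim_vec x. complex_of_real ((cmod (x $ i))^2))"
    unfolding cinner_def by (rule sum.cong) (simp_all, metis complex_norm_square of_real_power)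
  then show ?thesis by (simp add: vnorm_sq)
qed

lemma cauchy_schwarz:
  assumes "dim_vec y = dim_vec x"
  shows "cmod (cinner x y) \<le> vnorm x * vnorm y"
proof -
  have "cmod (cinner x y) \<le> (\<Sum>i<dim_vec x. cmod (x $ i * cnj (y $ i)))"
    unfolding cinner_def by (rule norm_sum)
  also have "\<dots> = (\<Sum>i<dim_vec x. \<bar>cmod (x $ i)\<bar> * \<bar>cmod (y $ i)\<bar>)"
    by (simp add: norm_mult)
  also have "\<dots> \<le> L2_set (\<lambda>i. cmod (x $ i)) {..<dim_vec x} * L2_set (\<lambda>i. cmod (y $ i)) {..<dim_vec x}"
    by (rule L2_set_mult_ineq)
  also have "\<dots> = vnorm x * vnorm y" using assms by (simp add: vnorm_L2_set)
  finally show ?thesis .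
qed

lemma vnorm_smult: "vnorm (c \<cdot>\<^sub>v x) = cmod c * vnorm x"
proof -
  have "vnorm (c \<cdot>\<^sub>v x) = sqrt ((cmod c)^2 * (\<Sum>i<dim_vec x. (cmod (x $ i))^2))"
    by (simp add: vnorm_def norm_mult power_mult_distrib sum_distrib_left)
  then show ?thesis by (simp add: real_sqrt_mult vnorm_def)
qed

lemma vnorm_unitary:
  assumes U: "unitary n U" and x: "x \<in> carrier_vec n"
  shows "vnorm (U *\<^sub>v x) = vnorm x"
proof -
  have "complex_of_real ((vnorm (U *\<^sub>v x))^2) = complex_of_real ((vnorm x)^2)"
    using unitary_cinner[OF U x x] by (simp only: cinner_self)
  then have "(vnorm (U *\<^sub>v x))^2 = (vnorm x)^2" using of_real_eq_iff by blast
  then show ?thesis using vnorm_nonneg by (metis power2_eq_iff_nonneg)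
qed

lemma op_norm_bdd_above:
  "bdd_above {vnorm (E *\<^sub>v v) | v. v \<in> carrier_vec (dim_col E) \<and> vnorm v \<le> 1}"
proof -
  define K where "K = (\<Sum>i<dim_row E. \<Sum>j<dim_col E. cmod (E $$ (i,j)))"
  have "vnorm (E *\<^sub>v v) \<le> K" if v: "v \<in> carrier_vec (dim_col E)" "vnorm v \<le> 1" for v
  proof -
    have vj: "cmod (v $ j) \<le> 1" if "j < dim_col E" for j
    proof -
      have "cmod (v $ j) \<le> L2_set (\<lambda>i. cmod (v $ i)) {..<dim_vec v}"
        by (rule member_le_L2_set) (use that v in auto)
      then show ?thesis using v by (simp add: vnorm_L2_set)
    qed
    have "vnorm (E *\<^sub>v v) \<le> (\<Sum>i<dim_row E. \<bar>cmod ((E *\<^sub>v v) $ i)\<bar>)"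
      unfolding vnorm_L2_set dim_mult_mat_vec by (rule L2_set_le_sum_abs)
    also have "\<dots> \<le> K" unfolding K_def
    proof (rule sum_mono)
      fix i assume i: "i \<in> {..<dim_row E}"
      have "\<bar>cmod ((E *\<^sub>v v) $ i)\<bar> = cmod (\<Sum>j\<in>{0..<dim_col E}. E $$ (i,j) * v $ j)"
        using i v by (simp add: scalar_prod_def)
      also have "\<dots> \<le> (\<Sum>j\<in>{0..<dim_col E}. cmod (E $$ (i,j) * v $ j))" by (rule norm_sum)
      also have "\<dots> \<le> (\<Sum>j\<in>{0..<dim_col E}. cmod (E $$ (i,j)))"
        using vj by (intro sum_mono) (simp add: norm_mult mult_left_le)
      finally show "\<bar>cmod ((E *\<^sub>v v) $ i)\<bar> \<le> (\<Sum>j<dim_col E. cmod (E $$ (i,j)))"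
        by (simp add: atLeast0LessThan)
    qed
    finally show ?thesis .
  qed
  then show ?thesis by (intro bdd_aboveI[of _ K]) blast
qed

lemma op_norm_upper:
  assumes "v \<in> carrier_vec (dim_col E)" "vnorm v \<le> 1"
  shows "vnorm (E *\<^sub>v v) \<le> op_norm E"
  unfolding op_norm_def by (rule cSup_upper[OF _ op_norm_bdd_above]) (use assms in blast)

lemma op_norm_bound:
  assumes v: "v \<in> carrier_vec (dim_col E)"
  shows "vnorm (E *\<^sub>v v) \<le> op_norm E * vnorm v"
proof (cases "vnorm v = 0")
  case True
  then have "v = 0\<^sub>v (dim_col E)" using vnorm_zero_iff v by auto
  then have "E *\<^sub>v v = 0\<^sub>v (dim_row E)" by auto
  then have "vnorm (E *\<^sub>v v) = 0" by (simp add: vnorm_zero_iff)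
  then show ?thesis using True by simp
next
  case False
  define c where "c = vnorm v"
  have c: "c > 0" using False vnorm_nonneg[of v] unfolding c_def by simp
  have cm: "cmod (complex_of_real (1 / c)) = 1 / c" using c by (simp only: norm_of_real) simp
  define w where "w = complex_of_real (1 / c) \<cdot>\<^sub>v v"
  have "vnorm (E *\<^sub>v w) \<le> op_norm E"
    by (rule op_norm_upper) (use v c cm in \<open>simp_all add: w_def vnorm_smult c_def\<close>)
  moreover have "E *\<^sub>v w = complex_of_real (1 / c) \<cdot>\<^sub>v (E *\<^sub>v v)"
    unfolding w_def using mult_mat_vec[OF _ v] by (metis carrier_matI)
  then have "vnorm (E *\<^sub>v w) = vnorm (E *\<^sub>v v) / c"
    using c cm by (simp add: vnorm_smult)
  ultimately show ?thesis using c unfolding c_def by (simp add: divide_le_eq mult.commute)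
qed

lemma quadratic_form_diff_bound:
  assumes A: "A \<in> carrier_mat n n" and B: "B \<in> carrier_mat n n" and x: "x \<in> carrier_vec n"
  shows "\<bar>Re (cinner (A *\<^sub>v x) x) - Re (cinner (B *\<^sub>v x) x)\<bar> \<le> op_norm (A - B) * (vnorm x)^2"
proof -
  have "cinner ((A - B) *\<^sub>v x) x = cinner (A *\<^sub>v x) x - cinner (B *\<^sub>v x) x"
    using A B minus_mult_distrib_mat_vec[OF A B x] by (simp add: cinner_minus_left)
  then have "\<bar>Re (cinner (A *\<^sub>v x) x) - Re (cinner (B *\<^sub>v x) x)\<bar> = \<bar>Re (cinner ((A - B) *\<^sub>v x) x)\<bar>"
    by simp
  also have "\<dots> \<le> cmod (cinner ((A - B) *\<^sub>v x) x)" by (rule abs_Re_le_cmod)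
  also have "\<dots> \<le> vnorm ((A - B) *\<^sub>v x) * vnorm x" by (rule cauchy_schwarz) (use A B x in simp)
  also have "\<dots> \<le> op_norm (A - B) * vnorm x * vnorm x"
    by (rule mult_right_mono[OF op_norm_bound vnorm_nonneg]) (use B x in simp)
  finally show ?thesis by (simp add: power2_eq_square mult.assoc)
qed

definition rdiag :: "nat \<Rightarrow> (nat \<Rightarrow> real) \<Rightarrow> complex mat" where
  "rdiag n a = mat n n (\<lambda>(i,j). if i = j then complex_of_real (a i) else 0)"

lemma rdiag_carrier[simp]: "rdiag n a \<in> carrier_mat n n"
  by (simp add: rdiag_def)

lemma rdiag_dims[simp]: "dim_row (rdiag n a) = n" "dim_col (rdiag n a) = n"
  by (simp_all add: rdiag_def)

lemma rdiag_index[simp]: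
  "i < n \<Longrightarrow> j < n \<Longrightarrow> rdiag n a $$ (i,j) = (if i = j then complex_of_real (a i) else 0)"
  by (simp add: rdiag_def)

lemma rdiag_mult_vec:
  assumes "x \<in> carrier_vec n" "i < n"
  shows "(rdiag n a *\<^sub>v x) $ i = complex_of_real (a i) * x $ i"
proof -
  have "(rdiag n a *\<^sub>v x) $ i = (\<Sum>j\<in>{0..<n}. (if i = j then complex_of_real (a i) else 0) * x $ j)"
    using assms by (simp add: rdiag_def scalar_prod_def)
  also have "\<dots> = (\<Sum>j\<in>{0..<n}. if j = i then complex_of_real (a i) * x $ j else 0)"
    by (rule sum.cong) auto
  finally show ?thesis using assms by simp
qed

definition unitary_diag :: "nat \<Rightarrow> complex mat \<Rightarrow> complex mat \<Rightarrow> (nat \<Rightarrow> real) \<Rightarrow> bool" where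
  "unitary_diag n A U a \<longleftrightarrow> A \<in> carrier_mat n n \<and> unitary n U \<and> ctrans U * A * U = rdiag n a"

lemma unitary_diag_intertwines:
  assumes "unitary_diag n A U a"
  shows "A * U = U * rdiag n a"
proof -
  have A: "A \<in> carrier_mat n n" and U: "U \<in> carrier_mat n n" and D: "ctrans U * A * U = rdiag n a"
    and u: "U * ctrans U = 1\<^sub>m n"
    using assms unitary_right_inverse by (auto simp: unitary_diag_def unitary_def)
  have UA: "ctrans U * A \<in> carrier_mat n n" using mult_carrier_mat[OF ctrans_carrier[OF U] A] .
  have "U * rdiag n a = (U * (ctrans U * A)) * U" unfolding D[symmetric] using assoc_mult_mat[OF U UA U] by simp
  also have "U * (ctrans U * A) = A" using assoc_mult_mat[OF U ctrans_carrier[OF U] A] u A by simp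
  finally show ?thesis by simp
qed

lemma unitary_diag_factor:
  assumes "unitary_diag n A U a"
  shows "A = U * rdiag n a * ctrans U"
proof -
  have A: "A \<in> carrier_mat n n" and U: "U \<in> carrier_mat n n" and u: "U * ctrans U = 1\<^sub>m n"
    using assms unitary_right_inverse by (auto simp: unitary_diag_def unitary_def)
  have "A = A * (U * ctrans U)" using u A by simp
  also have "\<dots> = (A * U) * ctrans U" using assoc_mult_mat[OF A U ctrans_carrier[OF U]] by simp
  finally show ?thesis unfolding unitary_diag_intertwines[OF assms] .
qed

lemma unitary_diag_char_poly:
  assumes "unitary_diag n A U a"
  shows "char_poly A = (\<Prod>i<n. [:- complex_of_real (a i), 1:])"
proof -
  have A: "A \<in> carrier_mat n n" and U: "U \<in> carrier_mat n n" and u: "U * ctrans U = 1\<^sub>m n"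
    and u': "ctrans U * U = 1\<^sub>m n"
    using assms unitary_right_inverse by (auto simp: unitary_diag_def unitary_def)
  have "similar_mat A (rdiag n a)"
    by (rule similar_matI[where n=n and P=U and Q="ctrans U"])
      (use U A u u' unitary_diag_factor[OF assms] in auto)
  then have "char_poly A = char_poly (rdiag n a)" by (rule char_poly_similar)
  also have "\<dots> = (\<Prod>x\<leftarrow>diag_mat (rdiag n a). [:- x, 1:])"
    by (rule char_poly_upper_triangular) (auto simp: upper_triangular_def rdiag_def)
  also have "diag_mat (rdiag n a) = map (\<lambda>i. complex_of_real (a i)) [0..<n]"
    by (simp add: diag_mat_def rdiag_def)
  also have "(\<Prod>x\<leftarrow>map (\<lambda>i. complex_of_real (a i)) [0..<n]. [:- x, 1:])
      = (\<Prod>i<n. [:- complex_of_real (a i), 1:])"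
    by (simp add: comp_def prod.distinct_set_conv_list[symmetric] atLeast0LessThan)
  finally show ?thesis .
qed

lemma unitary_diag_eigenvalue:
  assumes "unitary_diag n A U a" "i < n"
  shows "poly (char_poly A) (complex_of_real (a i)) = 0"
  unfolding unitary_diag_char_poly[OF assms(1)] poly_prod using assms(2)
  by (subst prod_zero_iff) (auto intro!: bexI[of _ i])

lemma unitary_diag_det:
  assumes "unitary_diag n A U a"
  shows "det A = complex_of_real (\<Prod>i<n. a i)"
proof -
  have U: "U \<in> carrier_mat n n" and u: "U * ctrans U = 1\<^sub>m n" and D: "rdiag n a \<in> carrier_mat n n"
    using assms unitary_right_inverse by (auto simp: unitary_diag_def unitary_def)
  have W: "ctrans U \<in> carrier_mat n n" using U by simp
  have "det A = det U * det (rdiag n a) * det (ctrans U)"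
    using unitary_diag_factor[OF assms] det_mult[OF mult_carrier_mat[OF U D] W] det_mult[OF U D]
    by simp
  also have "\<dots> = det (rdiag n a) * det (U * ctrans U)" using det_mult[OF U W] by (simp add: mult_ac)
  also have "\<dots> = det (rdiag n a)" using u by simp
  also have "\<dots> = prod_list (diag_mat (rdiag n a))"
    by (rule det_upper_triangular[OF _ D]) (simp add: upper_triangular_def)
  also have "\<dots> = complex_of_real (\<Prod>i<n. a i)"
    by (simp add: prod_list_diag_prod rdiag_def atLeast0LessThan)
  finally show ?thesis .
qed

lemma unitary_diag_eigenvalue_bound:
  assumes D: "unitary_diag n A U a" and i: "i < n"
  shows "\<bar>a i\<bar> \<le> op_norm A"
proof -
  have A: "A \<in> carrier_mat n n" and U: "unitary n U" and Uc: "U \<in> carrier_mat n n"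
    using D by (auto simp: unitary_diag_def unitary_def)
  define e where "e = (unit_vec n i :: complex vec)"
  have ec: "e \<in> carrier_vec n" by (simp add: e_def)
  define w where "w = U *\<^sub>v e"
  have wc: "w \<in> carrier_vec n" unfolding w_def using mult_mat_vec_carrier[OF Uc ec] .
  have De: "rdiag n a *\<^sub>v e = complex_of_real (a i) \<cdot>\<^sub>v e"
    by (rule eq_vecI) (use i in \<open>auto simp: e_def rdiag_mult_vec\<close>)
  have "A *\<^sub>v w = (A * U) *\<^sub>v e" unfolding w_def using assoc_mult_mat_vec[OF A Uc ec] by simp
  also have "\<dots> = U *\<^sub>v (rdiag n a *\<^sub>v e)"
    unfolding unitary_diag_intertwines[OF D] using assoc_mult_mat_vec[OF Uc _ ec] by simp
  also have "\<dots> = complex_of_real (a i) \<cdot>\<^sub>v w" unfolding De w_def using mult_mat_vec[OF Uc ec] by simp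
  finally have Aw: "A *\<^sub>v w = complex_of_real (a i) \<cdot>\<^sub>v w" .
  have "(vnorm e)^2 = (\<Sum>j<n. if j = i then 1 else 0)"
    unfolding vnorm_sq by (rule sum.cong) (auto simp: e_def unit_vec_def)
  then have "(vnorm e)^2 = 1" using i by simp
  then have "vnorm w = 1"
    unfolding w_def vnorm_unitary[OF U ec] using vnorm_nonneg[of e] by (simp add: power2_eq_1_iff)
  moreover have "vnorm (A *\<^sub>v w) \<le> op_norm A * vnorm w" by (rule op_norm_bound) (use A wc in simp)
  ultimately show ?thesis unfolding Aw vnorm_smult by simp
qed

lemma order_prod_linear:
  fixes c :: "nat \<Rightarrow> complex"
  shows "Polynomial.order x (\<Prod>i<n. [:- c i, 1:]) = card {i. i < n \<and> c i = x}"
proof (induction n)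
  case 0
  then show ?case by (simp add: order_0I)
next
  case (Suc n)
  have o1: "Polynomial.order x [:- c n, 1:] = (if c n = x then 1 else 0)"
    using order_power_n_n[of x 1] by (auto simp: order_0I)
  have "(\<Prod>i<n. [:- c i, 1:]) \<noteq> 0" "[:- c n, 1:] \<noteq> 0" by (simp_all add: prod_zero_iff)
  then have nz: "(\<Prod>i<n. [:- c i, 1:]) * [:- c n, 1:] \<noteq> 0" by (simp only: mult_eq_0_iff) blast
  have "Polynomial.order x (\<Prod>i<Suc n. [:- c i, 1:]) = Polynomial.order x (\<Prod>i<n. [:- c i, 1:]) + Polynomial.order x [:- c n, 1:]"
    using order_mult[OF nz] by (simp only: prod.lessThan_Suc)
  also have "\<dots> = card {i. i < n \<and> c i = x} + (if c n = x then 1 else 0)" using Suc o1 by simp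
  also have "\<dots> = card {i. i < Suc n \<and> c i = x}"
  proof -
    have "{i. i < Suc n \<and> c i = x} = {i. i < n \<and> c i = x} \<union> (if c n = x then {n} else {})"
      by (auto simp: less_Suc_eq)
    then show ?thesis by (simp add: card_Un_disjoint)
  qed
  finally show ?case .
qed

lemma sum_order_prod_linear:
  fixes c :: "nat \<Rightarrow> complex"
  assumes fin: "finite R"
  shows "(\<Sum>x\<in>R. Polynomial.order x (\<Prod>i<n. [:- c i, 1:])) = card {i. i < n \<and> c i \<in> R}"
proof -
  have "(\<Sum>x\<in>R. Polynomial.order x (\<Prod>i<n. [:- c i, 1:])) = (\<Sum>x\<in>R. card {i. i < n \<and> c i = x})"
    by (simp add: order_prod_linear)
  also have "\<dots> = card (\<Union>x\<in>R. {i. i < n \<and> c i = x})"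
    by (rule card_UN_disjoint[symmetric]) (use fin in auto)
  also have "(\<Union>x\<in>R. {i. i < n \<and> c i = x}) = {i. i < n \<and> c i \<in> R}"
    by auto
  finally show ?thesis .
qed

lemma unitary_diag_eigenvalue_counts:
  assumes D: "unitary_diag n A U a"
  shows "pos_eig_count A = card {i. i < n \<and> a i > 0}"
    and "neg_eig_count A = card {i. i < n \<and> a i < 0}"
proof -
  let ?c = "\<lambda>i. complex_of_real (a i)"
  have cp: "char_poly A = (\<Prod>i<n. [:- ?c i, 1:])" by (rule unitary_diag_char_poly[OF D])
  have fin: "finite {x. poly (char_poly A) x = 0}"
    by (rule poly_roots_finite) (simp add: cp prod_zero_iff)
  have "pos_eig_count A = card {i. i < n \<and> ?c i \<in> {x. poly (char_poly A) x = 0 \<and> Im x = 0 \<and> Re x > 0}}"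
    unfolding pos_eig_count_def cp[symmetric]
    by (rule sum_order_prod_linear[where c="?c" and n=n, folded cp]) (use fin in \<open>auto intro: finite_subset\<close>)
  also have "\<dots> = card {i. i < n \<and> a i > 0}"
    using unitary_diag_eigenvalue[OF D] by (intro arg_cong[where f=card]) auto
  finally show "pos_eig_count A = card {i. i < n \<and> a i > 0}" .
  have "neg_eig_count A = card {i. i < n \<and> ?c i \<in> {x. poly (char_poly A) x = 0 \<and> Im x = 0 \<and> Re x < 0}}"
    unfolding neg_eig_count_def cp[symmetric]
    by (rule sum_order_prod_linear[where c="?c" and n=n, folded cp]) (use fin in \<open>auto intro: finite_subset\<close>)
  also have "\<dots> = card {i. i < n \<and> a i < 0}"
    using unitary_diag_eigenvalue[OF D] by (intro arg_cong[where f=card]) auto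
  finally show "neg_eig_count A = card {i. i < n \<and> a i < 0}" .
qed

lemma unitary_diag_quadratic_form:
  assumes D: "unitary_diag n A U a" and x: "x \<in> carrier_vec n"
  shows "Re (cinner (A *\<^sub>v (U *\<^sub>v x)) (U *\<^sub>v x)) = (\<Sum>i<n. a i * (cmod (x $ i))^2)"
proof -
  have A: "A \<in> carrier_mat n n" and U: "unitary n U" and Uc: "U \<in> carrier_mat n n"
    using D by (auto simp: unitary_diag_def unitary_def)
  have "A *\<^sub>v (U *\<^sub>v x) = (A * U) *\<^sub>v x" using assoc_mult_mat_vec[OF A Uc x] by simp
  also have "\<dots> = U *\<^sub>v (rdiag n a *\<^sub>v x)"
    unfolding unitary_diag_intertwines[OF D] using assoc_mult_mat_vec[OF Uc _ x] by simp
  finally have "cinner (A *\<^sub>v (U *\<^sub>v x)) (U *\<^sub>v x) = cinner (rdiag n a *\<^sub>v x) x"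
    using unitary_cinner[OF U _ x] x mult_mat_vec_carrier[OF rdiag_carrier x] by simp
  also have "\<dots> = (\<Sum>i<n. complex_of_real (a i) * x $ i * cnj (x $ i))"
    unfolding cinner_def dim_mult_mat_vec using rdiag_mult_vec[OF x] by simp
  also have "\<dots> = (\<Sum>i<n. complex_of_real (a i * (cmod (x $ i))^2))"
    by (rule sum.cong) (simp_all add: mult.assoc, metis complex_norm_square of_real_power)
  finally show ?thesis by simp
qed

lemma hermitian_eigenvalue_real:
  assumes h: "hermitian_mat m A" and v: "v \<in> carrier_vec m" and v0: "v \<noteq> 0\<^sub>v m"
    and ev: "A *\<^sub>v v = e \<cdot>\<^sub>v v"
  shows "cnj e = e"
proof -
  have A: "A \<in> carrier_mat m m" and aA: "ctrans A = A" using h hermitian_iff_ctrans by auto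
  have "cinner (A *\<^sub>v v) v = cinner v (A *\<^sub>v v)" using cinner_mult[OF A v v] aA by simp
  then have "e * cinner v v = cnj e * cinner v v" unfolding ev using v
    by (simp add: cinner_smult_left cinner_smult_right)
  moreover have "cinner v v \<noteq> 0"
    using v v0 vnorm_zero_iff[of v] by (auto simp: cinner_self)
  ultimately show ?thesis by simp
qed

lemma normalized_corthogonal:
  assumes wsc: "set ws \<subseteq> carrier_vec m" and orth: "corthogonal ws"
    and i: "i < length ws" and j: "j < length ws"
  defines "us \<equiv> map (\<lambda>w. complex_of_real (1 / vnorm w) \<cdot>\<^sub>v w) ws"
  shows "cinner (us ! j) (us ! i) = (if i = j then 1 else 0)"
proof -
  have wsi: "ws ! k \<in> carrier_vec m" if "k < length ws" for k using wsc that by auto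
  have ws_orth: "cinner (ws ! j) (ws ! i) = 0 \<longleftrightarrow> i \<noteq> j"
    using corthogonalD[OF orth j i] wsi[OF i] wsi[OF j] by (auto simp: cinner_eq_cscalar_prod)
  define c where "c = (\<lambda>k. 1 / vnorm (ws ! k))"
  have eq: "cinner (us ! j) (us ! i) = complex_of_real (c j * c i) * cinner (ws ! j) (ws ! i)"
    using i j wsi[OF i] wsi[OF j] by (simp add: us_def c_def cinner_smult_left cinner_smult_right)
  show ?thesis
  proof (cases "i = j")
    case True
    have "c i * c i * (vnorm (ws ! i))^2 = 1"
      using ws_orth True by (auto simp: c_def power2_eq_square cinner_self)
    then have "complex_of_real (c i * c i) * complex_of_real ((vnorm (ws ! i))^2) = 1"
      by (metis of_real_1 of_real_mult)
    then show ?thesis using eq True by (simp only: cinner_self) simp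
  qed (use eq ws_orth in simp)
qed

(* Every nonzero vector is parallel to the first column of some unitary matrix
   (basis completion followed by Gram-Schmidt and normalization). *)
lemma unitary_first_column:
  assumes v: "v \<in> carrier_vec m" and v0: "v \<noteq> 0\<^sub>v m"
  shows "\<exists>W c. unitary m W \<and> col W 0 = c \<cdot>\<^sub>v v"
proof -
  interpret cof_vec_space m "TYPE(complex)" .
  define b where "b = basis_completion v"
  from basis_completion[OF v v0, folded b_def]
  have dist_b: "distinct b" and indep: "\<not> lin_dep (set b)" and bc: "set b \<subseteq> carrier_vec m"
    and hdb: "hd b = v" and len_b: "length b = m" by auto
  have m0: "m \<noteq> 0"
  proof
    assume "m = 0"
    then have "v = 0\<^sub>v m" using v by (intro eq_vecI) auto
    with v0 show False by simp
  qed
  from hdb len_b m0 obtain vs where bv: "b = v # vs" by (cases b) auto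
  define ws where "ws = gram_schmidt m b"
  from gram_schmidt_result[OF bc dist_b indep refl, folded ws_def]
  have wsc: "set ws \<subseteq> carrier_vec m" and orth: "corthogonal ws" and lws: "length ws = m"
    by (auto simp: len_b)
  have ws0: "ws ! 0 = v"
    using gram_schmidt_hd[OF v, of vs] lws m0 unfolding ws_def[symmetric] bv[symmetric]
    by (metis hd_conv_nth list.size(3))
  define us where "us = map (\<lambda>w. complex_of_real (1 / vnorm w) \<cdot>\<^sub>v w) ws"
  have "unitary m (mat_of_cols m us)"
  proof (rule unitary_mat_of_cols)
    show "cinner (us ! j) (us ! i) = (if i = j then 1 else 0)" if "i < m" "j < m" for i j
      unfolding us_def by (rule normalized_corthogonal[OF wsc orth]) (use that lws in auto)
  qed (use lws wsc in \<open>auto simp: us_def\<close>)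
  moreover have "col (mat_of_cols m us) 0 = complex_of_real (1 / vnorm v) \<cdot>\<^sub>v v"
  proof -
    have "ws ! 0 \<in> carrier_vec m" using wsc lws m0 by auto
    then have "col (mat_of_cols m us) 0 = us ! 0" using m0 lws by (simp add: us_def)
    then show ?thesis using m0 lws ws0 by (simp add: us_def)
  qed
  ultimately show ?thesis by blast
qed

definition bdiag :: "nat \<Rightarrow> complex \<Rightarrow> complex mat \<Rightarrow> complex mat" where
  "bdiag n c M = mat (Suc n) (Suc n)
     (\<lambda>(i,j). if i = 0 \<and> j = 0 then c else if i = 0 \<or> j = 0 then 0 else M $$ (i - 1, j - 1))"

lemma bdiag_carrier[simp]: "bdiag n c M \<in> carrier_mat (Suc n) (Suc n)"
  by (simp add: bdiag_def)

lemma bdiag_dims[simp]: "dim_row (bdiag n c M) = Suc n" "dim_col (bdiag n c M) = Suc n"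
  by (simp_all add: bdiag_def)

lemma bdiag_index[simp]:
  "i < Suc n \<Longrightarrow> j < Suc n \<Longrightarrow> bdiag n c M $$ (i,j) =
     (if i = 0 \<and> j = 0 then c else if i = 0 \<or> j = 0 then 0 else M $$ (i - 1, j - 1))"
  by (simp add: bdiag_def)

lemma bdiag_mult:
  assumes M: "M \<in> carrier_mat n n" and N: "N \<in> carrier_mat n n"
  shows "bdiag n c M * bdiag n d N = bdiag n (c * d) (M * N)"
proof (rule eq_matI)
  fix i j assume "i < dim_row (bdiag n (c * d) (M * N))" "j < dim_col (bdiag n (c * d) (M * N))"
  then have i: "i < Suc n" and j: "j < Suc n" by auto
  have "(bdiag n c M * bdiag n d N) $$ (i,j)
      = (\<Sum>k\<in>{0..<Suc n}. bdiag n c M $$ (i,k) * bdiag n d N $$ (k,j))"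
    using i j by (simp add: scalar_prod_def)
  also have "\<dots> = bdiag n c M $$ (i,0) * bdiag n d N $$ (0,j)
      + (\<Sum>k\<in>{0..<n}. bdiag n c M $$ (i,Suc k) * bdiag n d N $$ (Suc k,j))"
    by (subst sum.atLeast0_lessThan_Suc_shift) (simp add: comp_def)
  also have "\<dots> = bdiag n (c * d) (M * N) $$ (i,j)"
  proof (cases "i = 0 \<or> j = 0")
    case True
    then show ?thesis using i j by auto
  next
    case False
    then obtain i' j' where i': "i = Suc i'" "i' < n" and j': "j = Suc j'" "j' < n"
      using i j by (metis less_Suc_eq_0_disj)
    have "(\<Sum>k\<in>{0..<n}. bdiag n c M $$ (i,Suc k) * bdiag n d N $$ (Suc k,j))
        = (\<Sum>k\<in>{0..<n}. M $$ (i',k) * N $$ (k,j'))"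
      using i' j' by (intro sum.cong) auto
    also have "\<dots> = (M * N) $$ (i',j')" using M N i' j' by (simp add: scalar_prod_def)
    finally show ?thesis using i' j' by simp
  qed
  finally show "(bdiag n c M * bdiag n d N) $$ (i,j) = bdiag n (c * d) (M * N) $$ (i,j)" .
qed auto

lemma bdiag_ctrans:
  assumes "M \<in> carrier_mat n n"
  shows "ctrans (bdiag n c M) = bdiag n (cnj c) (ctrans M)"
  by (rule eq_matI) (use assms in \<open>auto simp: ctrans_def bdiag_def\<close>)

lemma bdiag_rdiag: "bdiag n (complex_of_real r) (rdiag n a) = rdiag (Suc n) (case_nat r a)"
  by (rule eq_matI) (auto simp: bdiag_def rdiag_def split: nat.splits)

lemma unitary_bdiag:
  assumes "unitary n U"
  shows "unitary (Suc n) (bdiag n 1 U)"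
proof -
  have U: "U \<in> carrier_mat n n" and u: "ctrans U * U = 1\<^sub>m n" using assms by (auto simp: unitary_def)
  have "ctrans (bdiag n 1 U) * bdiag n 1 U = bdiag n 1 (1\<^sub>m n)"
    using bdiag_mult[OF ctrans_carrier[OF U] U] u by (simp add: bdiag_ctrans[OF U])
  also have "\<dots> = 1\<^sub>m (Suc n)" by (rule eq_matI) (auto simp: bdiag_def)
  finally show ?thesis by (simp add: unitary_def)
qed

lemma hermitian_first_column_split:
  assumes h: "hermitian_mat (Suc n) A"
    and col0: "\<And>i. i < Suc n \<Longrightarrow> A $$ (i,0) = (if i = 0 then e else 0)"
  defines "A3 \<equiv> mat n n (\<lambda>(i,j). A $$ (Suc i, Suc j))"
  shows "hermitian_mat n A3" and "A = bdiag n e A3"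
proof -
  have A: "A \<in> carrier_mat (Suc n) (Suc n)"
    and sym: "\<And>i j. i < Suc n \<Longrightarrow> j < Suc n \<Longrightarrow> A $$ (i,j) = cnj (A $$ (j,i))"
    using h unfolding hermitian_mat_def by blast+
  show "hermitian_mat n A3" unfolding hermitian_mat_def
  proof (intro conjI allI impI)
    fix i j assume "i < n" "j < n"
    then show "A3 $$ (i,j) = cnj (A3 $$ (j,i))" using sym[of "Suc i" "Suc j"] by (simp add: A3_def)
  qed (simp add: A3_def)
  have row0: "A $$ (0,j) = (if j = 0 then e else 0)" if j: "j < Suc n" for j
  proof (cases "j = 0")
    case False
    have "A $$ (0,j) = cnj (A $$ (j,0))" using sym[of 0 j] j by blast
    then show ?thesis using col0[OF j] False by simp
  qed (use col0[of 0] in simp)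
  show "A = bdiag n e A3"
  proof (rule eq_matI)
    fix i j assume "i < dim_row (bdiag n e A3)" "j < dim_col (bdiag n e A3)"
    then have i: "i < Suc n" and j: "j < Suc n" by auto
    show "A $$ (i,j) = bdiag n e A3 $$ (i,j)"
    proof (cases "i = 0 \<or> j = 0")
      case True
      then show ?thesis using i j col0 row0 by auto
    next
      case False
      then obtain i' j' where "i = Suc i'" "j = Suc j'" using not0_implies_Suc by blast
      then show ?thesis using i j by (simp add: A3_def)
    qed
  qed (use A in auto)
qed

(* Deflation: conjugating by a unitary matrix whose first column is an eigenvector splits off
   the eigenvalue as a 1x1 block, leaving a hermitian matrix of size n. *)
lemma hermitian_deflation:
  assumes h: "hermitian_mat (Suc n) A"
    and v: "v \<in> carrier_vec (Suc n)" "v \<noteq> 0\<^sub>v (Suc n)" and Av: "A *\<^sub>v v = e \<cdot>\<^sub>v v"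
  shows "\<exists>W A3. unitary (Suc n) W \<and> hermitian_mat n A3 \<and> ctrans W * A * W = bdiag n e A3"
proof -
  have A: "A \<in> carrier_mat (Suc n) (Suc n)" using h by (simp add: hermitian_mat_def)
  obtain W c where W: "unitary (Suc n) W" and W0: "col W 0 = c \<cdot>\<^sub>v v"
    using unitary_first_column[OF v] by blast
  have Wc: "W \<in> carrier_mat (Suc n) (Suc n)" and Wa: "ctrans W \<in> carrier_mat (Suc n) (Suc n)"
    and wu: "ctrans W * W = 1\<^sub>m (Suc n)"
    using W by (auto simp: unitary_def)
  have AW0: "col (A * W) 0 = e \<cdot>\<^sub>v col W 0"
  proof -
    have "col (A * W) 0 = A *\<^sub>v col W 0" using col_mult2[OF A Wc] by simp
    also have "\<dots> = c \<cdot>\<^sub>v (A *\<^sub>v v)" unfolding W0 using mult_mat_vec[OF A v(1)] .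
    finally show ?thesis unfolding Av W0 by (simp add: smult_smult_assoc mult.commute)
  qed
  have col0: "(ctrans W * A * W) $$ (i,0) = (if i = 0 then e else 0)" if i: "i < Suc n" for i
  proof -
    have "ctrans W * A * W = ctrans W * (A * W)" using assoc_mult_mat[OF Wa A Wc] .
    then have "(ctrans W * A * W) $$ (i,0) = row (ctrans W) i \<bullet> col (A * W) 0"
      by (simp only:) (rule index_mult_mat, use i Wa A Wc in auto)
    also have "\<dots> = e * (row (ctrans W) i \<bullet> col W 0)" unfolding AW0
      using Wa Wc i by (simp add: scalar_prod_smult_distrib[of _ "Suc n"])
    also have "row (ctrans W) i \<bullet> col W 0 = (ctrans W * W) $$ (i,0)" using i Wa Wc by simp
    finally show ?thesis unfolding wu using i by simp
  qed
  have "hermitian_mat (Suc n) (ctrans W * A * W)" by (rule hermitian_unitary_conj[OF h W])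
  from hermitian_first_column_split[OF this col0] W show ?thesis by blast
qed

lemma hermitian_top_eigenvalue:
  assumes h: "hermitian_mat (Suc n) A"
  shows "\<exists>m. eigenvalue A (complex_of_real m) \<and> (\<forall>x. poly (char_poly A) x = 0 \<longrightarrow> Re x \<le> m)"
proof -
  have A: "A \<in> carrier_mat (Suc n) (Suc n)" using h by (simp add: hermitian_mat_def)
  define R where "R = {x. poly (char_poly A) x = 0}"
  have degA: "degree (char_poly A) = Suc n" using degree_monic_char_poly[OF A] by simp
  then have finR: "finite R" unfolding R_def by (intro poly_roots_finite) auto
  have "\<not> constant (poly (char_poly A))" using constant_degree[of "char_poly A"] degA by simp
  then have Rne: "R \<noteq> {}" using fundamental_theorem_of_algebra unfolding R_def by blast
  have Rreal: "x = complex_of_real (Re x)" if "x \<in> R" for x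
  proof -
    have "eigenvalue A x" using that unfolding R_def eigenvalue_root_char_poly[OF A] by simp
    then obtain v where "eigenvector A v x" unfolding eigenvalue_def by blast
    then have "v \<in> carrier_vec (Suc n)" "v \<noteq> 0\<^sub>v (Suc n)" "A *\<^sub>v v = x \<cdot>\<^sub>v v"
      unfolding eigenvector_def using A by auto
    then have "cnj x = x" using hermitian_eigenvalue_real[OF h] by blast
    then show ?thesis by (metis Reals_cnj_iff complex_is_Real_iff of_real_Re)
  qed
  define m where "m = Max (Re ` R)"
  obtain x where x: "x \<in> R" "Re x = m" using finR Rne unfolding m_def
    by (metis (mono_tags, lifting) Max_in finite_imageI image_iff image_is_empty)
  have "eigenvalue A (complex_of_real m)"
    using x Rreal[OF x(1)] unfolding R_def eigenvalue_root_char_poly[OF A] by simp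
  moreover have "Re y \<le> m" if "poly (char_poly A) y = 0" for y
    unfolding m_def using finR that by (simp add: R_def)
  ultimately show ?thesis by blast
qed

definition sorted_desc :: "nat \<Rightarrow> (nat \<Rightarrow> real) \<Rightarrow> bool" where
  "sorted_desc n a \<longleftrightarrow> (\<forall>i j. i \<le> j \<longrightarrow> j < n \<longrightarrow> a j \<le> a i)"

lemma sorted_desc_case_nat:
  assumes "sorted_desc n a" "\<And>j. j < n \<Longrightarrow> a j \<le> m"
  shows "sorted_desc (Suc n) (case_nat m a)"
  unfolding sorted_desc_def
proof (intro allI impI)
  fix i j assume ij: "i \<le> j" "j < Suc n"
  then show "case_nat m a j \<le> case_nat m a i"
    using assms by (cases i; cases j) (auto simp: sorted_desc_def)
qed

lemma unitary_diag_extend: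
  assumes W: "unitary (Suc n) W" and A: "A \<in> carrier_mat (Suc n) (Suc n)"
    and WAW: "ctrans W * A * W = bdiag n (complex_of_real m) A3"
    and D3: "unitary_diag n A3 U3 a3"
  shows "unitary_diag (Suc n) A (W * bdiag n 1 U3) (case_nat m a3)"
proof -
  have A3: "A3 \<in> carrier_mat n n" and U3: "unitary n U3" and U3c: "U3 \<in> carrier_mat n n"
    and DA3: "ctrans U3 * A3 * U3 = rdiag n a3"
    using D3 by (auto simp: unitary_diag_def unitary_def)
  have Wc: "W \<in> carrier_mat (Suc n) (Suc n)" using W by (simp add: unitary_def)
  let ?P = "bdiag n 1 U3"
  have Pc: "?P \<in> carrier_mat (Suc n) (Suc n)" and Pa: "ctrans ?P \<in> carrier_mat (Suc n) (Suc n)"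
    and Wa: "ctrans W \<in> carrier_mat (Suc n) (Suc n)" using Wc by simp_all
  have WA: "ctrans W * A \<in> carrier_mat (Suc n) (Suc n)" using mult_carrier_mat[OF Wa A] .
  have "ctrans (W * ?P) * A * (W * ?P) = ctrans ?P * (ctrans W * A) * (W * ?P)"
    unfolding ctrans_mult[OF Wc Pc] using assoc_mult_mat[OF Pa Wa A] by simp
  also have "\<dots> = ctrans ?P * ((ctrans W * A * W) * ?P)"
    using assoc_mult_mat[OF Pa WA mult_carrier_mat[OF Wc Pc]] assoc_mult_mat[OF WA Wc Pc] by simp
  also have "\<dots> = ctrans ?P * (ctrans W * A * W) * ?P"
    using assoc_mult_mat[OF Pa mult_carrier_mat[OF WA Wc] Pc] by simp
  also have "\<dots> = bdiag n (complex_of_real m) (ctrans U3 * A3 * U3)"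
    unfolding WAW bdiag_ctrans[OF U3c]
    using bdiag_mult[OF ctrans_carrier[OF U3c] A3] bdiag_mult[OF mult_carrier_mat[OF ctrans_carrier[OF U3c] A3] U3c]
    by simp
  also have "\<dots> = rdiag (Suc n) (case_nat m a3)" unfolding DA3 by (rule bdiag_rdiag)
  finally show ?thesis
    using A unitary_mult[OF W unitary_bdiag[OF U3]] by (simp add: unitary_diag_def)
qed

theorem spectral_theorem:
  assumes "hermitian_mat n A"
  shows "\<exists>U a. unitary_diag n A U a \<and> sorted_desc n a"
  using assms
proof (induction n arbitrary: A)
  case 0
  then have "A \<in> carrier_mat 0 0" by (simp add: hermitian_mat_def)
  then have "unitary_diag 0 A (1\<^sub>m 0) (\<lambda>_. 0)"
    unfolding unitary_diag_def unitary_def by (auto intro!: eq_matI)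
  then show ?case by (auto simp: sorted_desc_def)
next
  case (Suc n)
  have A: "A \<in> carrier_mat (Suc n) (Suc n)" using Suc.prems by (simp add: hermitian_mat_def)
  obtain m where ev: "eigenvalue A (complex_of_real m)"
    and top: "\<And>x. poly (char_poly A) x = 0 \<Longrightarrow> Re x \<le> m"
    using hermitian_top_eigenvalue[OF Suc.prems] by blast
  obtain v where "eigenvector A v (complex_of_real m)"
    using ev unfolding eigenvalue_def by blast
  then have v: "v \<in> carrier_vec (Suc n)" "v \<noteq> 0\<^sub>v (Suc n)" "A *\<^sub>v v = complex_of_real m \<cdot>\<^sub>v v"
    using A unfolding eigenvector_def by auto
  obtain W A3 where W: "unitary (Suc n) W" and h3: "hermitian_mat n A3"
    and WAW: "ctrans W * A * W = bdiag n (complex_of_real m) A3"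
    using hermitian_deflation[OF Suc.prems v] by blast
  obtain U3 a3 where D3: "unitary_diag n A3 U3 a3" and s3: "sorted_desc n a3"
    using Suc.IH[OF h3] by blast
  let ?a = "case_nat m a3"
  have D: "unitary_diag (Suc n) A (W * bdiag n 1 U3) ?a"
    by (rule unitary_diag_extend[OF W A WAW D3])
  have "a3 j \<le> m" if "j < n" for j
    using top[OF unitary_diag_eigenvalue[OF D, of "Suc j"]] that by simp
  then have "sorted_desc (Suc n) ?a" by (rule sorted_desc_case_nat[OF s3])
  with D show ?case by blast
qed

lemma underdetermined_kernel:
  fixes C :: "complex mat"
  assumes C: "C \<in> carrier_mat m n" and mn: "m < n"
  shows "\<exists>g. g \<in> carrier_vec n \<and> g \<noteq> 0\<^sub>v n \<and> C *\<^sub>v g = 0\<^sub>v m"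
proof -
  define P where "P = mat n n (\<lambda>(i,j). if i < m then C $$ (i,j) else (0::complex))"
  have P: "P \<in> carrier_mat n n" by (simp add: P_def)
  have "P = mat\<^sub>r n n (\<lambda>i. if i = n - 1 then 0\<^sub>v n else row P i)"
    by (rule eq_matI) (use mn in \<open>auto simp: P_def\<close>)
  also have "det \<dots> = 0" by (rule det_row_0) (use mn in \<open>auto simp: P_def row_def\<close>)
  finally obtain g where g: "g \<in> carrier_vec n" "g \<noteq> 0\<^sub>v n" "P *\<^sub>v g = 0\<^sub>v n"
    using det_0_iff_vec_prod_zero_field[OF P] by blast
  have "C *\<^sub>v g = 0\<^sub>v m"
  proof (rule eq_vecI)
    fix i assume "i < dim_vec (0\<^sub>v m :: complex vec)"
    then have i: "i < m" by simp
    have "(C *\<^sub>v g) $ i = (P *\<^sub>v g) $ i"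
      using i mn C g(1) by (simp add: P_def scalar_prod_def row_def)
    then show "(C *\<^sub>v g) $ i = 0\<^sub>v m $ i" using g(3) i mn by simp
  qed (use C in simp)
  with g show ?thesis by blast
qed

(* Dimension count: the span of the first k+1 columns of U meets the span of the last n-k
   columns of V nontrivially. *)
lemma column_spans_intersect:
  assumes U: "unitary n U" and V: "unitary n V" and k: "k < n"
  shows "\<exists>\<alpha> \<beta>. \<alpha> \<in> carrier_vec n \<and> \<beta> \<in> carrier_vec n \<and> \<alpha> \<noteq> 0\<^sub>v n
    \<and> (\<forall>i<n. k < i \<longrightarrow> \<alpha> $ i = 0) \<and> (\<forall>j<k. \<beta> $ j = 0) \<and> U *\<^sub>v \<alpha> = V *\<^sub>v \<beta>"
proof -
  have Uc: "U \<in> carrier_mat n n" and Vc: "V \<in> carrier_mat n n" and Va: "ctrans V \<in> carrier_mat n n"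
    using U V by (auto simp: unitary_def)
  define C where "C = ctrans V * U"
  have Cc: "C \<in> carrier_mat n n" unfolding C_def using mult_carrier_mat[OF Va Uc] .
  define M where "M = mat k (Suc k) (\<lambda>(j,i). C $$ (j,i))"
  obtain g where g: "g \<in> carrier_vec (Suc k)" "g \<noteq> 0\<^sub>v (Suc k)" "M *\<^sub>v g = 0\<^sub>v k"
    using underdetermined_kernel[of M k "Suc k"] by (auto simp: M_def)
  define \<alpha> where "\<alpha> = vec n (\<lambda>i. if i \<le> k then g $ i else 0)"
  have \<alpha>: "\<alpha> \<in> carrier_vec n" by (simp add: \<alpha>_def)
  have "\<alpha> \<noteq> 0\<^sub>v n"
  proof
    assume "\<alpha> = 0\<^sub>v n"
    have "g $ i = 0" if "i < Suc k" for i
      using arg_cong[OF \<open>\<alpha> = 0\<^sub>v n\<close>, of "\<lambda>v. v $ i"] that k by (simp add: \<alpha>_def)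
    then have "g = 0\<^sub>v (Suc k)" using g(1) by (intro eq_vecI) auto
    with g show False by simp
  qed
  define \<beta> where "\<beta> = C *\<^sub>v \<alpha>"
  have \<beta>: "\<beta> \<in> carrier_vec n" unfolding \<beta>_def using mult_mat_vec_carrier[OF Cc \<alpha>] .
  have "V *\<^sub>v \<beta> = (V * ctrans V) *\<^sub>v (U *\<^sub>v \<alpha>)"
    unfolding \<beta>_def C_def
    using assoc_mult_mat_vec[OF Va Uc \<alpha>] assoc_mult_mat_vec[OF Vc Va mult_mat_vec_carrier[OF Uc \<alpha>]]
    by simp
  also have "\<dots> = U *\<^sub>v \<alpha>" using unitary_right_inverse[OF V] mult_mat_vec_carrier[OF Uc \<alpha>] by simp
  finally have UV: "U *\<^sub>v \<alpha> = V *\<^sub>v \<beta>" ..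
  have "\<beta> $ j = 0" if j: "j < k" for j
  proof -
    have "\<beta> $ j = (\<Sum>i\<in>{0..<n}. C $$ (j,i) * \<alpha> $ i)"
      unfolding \<beta>_def using Cc \<alpha> j k by (simp add: scalar_prod_def)
    also have "\<dots> = (\<Sum>i\<in>{0..<Suc k}. C $$ (j,i) * \<alpha> $ i)"
      by (rule sum.mono_neutral_right) (use k in \<open>auto simp: \<alpha>_def\<close>)
    also have "\<dots> = (M *\<^sub>v g) $ j"
      using j k g(1) by (simp add: M_def scalar_prod_def \<alpha>_def)
    finally show ?thesis using g(3) j by simp
  qed
  moreover have "\<alpha> $ i = 0" if "i < n" "k < i" for i using that by (simp add: \<alpha>_def)
  ultimately show ?thesis using \<alpha> \<beta> \<open>\<alpha> \<noteq> 0\<^sub>v n\<close> UV by blast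
qed

lemma rayleigh_lower:
  assumes D: "unitary_diag n A U a" and s: "sorted_desc n a" and k: "k < n"
    and \<alpha>: "\<alpha> \<in> carrier_vec n" and supp: "\<forall>i<n. k < i \<longrightarrow> \<alpha> $ i = 0"
  shows "a k * (vnorm \<alpha>)^2 \<le> Re (cinner (A *\<^sub>v (U *\<^sub>v \<alpha>)) (U *\<^sub>v \<alpha>))"
proof -
  have "a k * (vnorm \<alpha>)^2 = (\<Sum>i<n. a k * (cmod (\<alpha> $ i))^2)"
    using \<alpha> by (simp add: vnorm_sq sum_distrib_left)
  also have "\<dots> \<le> (\<Sum>i<n. a i * (cmod (\<alpha> $ i))^2)"
  proof (rule sum_mono)
    fix i assume "i \<in> {..<n}"
    then show "a k * (cmod (\<alpha> $ i))^2 \<le> a i * (cmod (\<alpha> $ i))^2"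
      using s supp k by (cases "i \<le> k") (auto simp: sorted_desc_def mult_right_mono)
  qed
  finally show ?thesis using unitary_diag_quadratic_form[OF D \<alpha>] by simp
qed

lemma rayleigh_upper:
  assumes D: "unitary_diag n A U a" and s: "sorted_desc n a" and k: "k < n"
    and \<beta>: "\<beta> \<in> carrier_vec n" and supp: "\<forall>j<k. \<beta> $ j = 0"
  shows "Re (cinner (A *\<^sub>v (U *\<^sub>v \<beta>)) (U *\<^sub>v \<beta>)) \<le> a k * (vnorm \<beta>)^2"
proof -
  have "(\<Sum>i<n. a i * (cmod (\<beta> $ i))^2) \<le> (\<Sum>i<n. a k * (cmod (\<beta> $ i))^2)"
  proof (rule sum_mono)
    fix i assume "i \<in> {..<n}"
    then show "a i * (cmod (\<beta> $ i))^2 \<le> a k * (cmod (\<beta> $ i))^2"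
      using s supp by (cases "i < k") (auto simp: sorted_desc_def mult_right_mono)
  qed
  then show ?thesis
    using unitary_diag_quadratic_form[OF D \<beta>] \<beta> by (simp add: vnorm_sq sum_distrib_left)
qed

lemma weyl_one_sided:
  assumes DA: "unitary_diag n A U a" and sa: "sorted_desc n a"
    and DB: "unitary_diag n B V b" and sb: "sorted_desc n b"
    and H: "\<And>x. x \<in> carrier_vec n \<Longrightarrow> Re (cinner (A *\<^sub>v x) x) - Re (cinner (B *\<^sub>v x) x) \<le> d * (vnorm x)^2"
    and k: "k < n"
  shows "a k \<le> b k + d"
proof -
  have U: "unitary n U" and V: "unitary n V" and Uc: "U \<in> carrier_mat n n"
    using DA DB by (auto simp: unitary_diag_def unitary_def)
  obtain \<alpha> \<beta> where \<alpha>: "\<alpha> \<in> carrier_vec n" and \<beta>: "\<beta> \<in> carrier_vec n" and \<alpha>0: "\<alpha> \<noteq> 0\<^sub>v n"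
    and supp\<alpha>: "\<forall>i<n. k < i \<longrightarrow> \<alpha> $ i = 0" and supp\<beta>: "\<forall>j<k. \<beta> $ j = 0"
    and x: "U *\<^sub>v \<alpha> = V *\<^sub>v \<beta>"
    using column_spans_intersect[OF U V k] by blast
  let ?x = "U *\<^sub>v \<alpha>"
  have nx\<alpha>: "vnorm ?x = vnorm \<alpha>" and nx\<beta>: "vnorm ?x = vnorm \<beta>"
    using vnorm_unitary[OF U \<alpha>] vnorm_unitary[OF V \<beta>] x by simp_all
  have "vnorm \<alpha> \<noteq> 0" using \<alpha>0 \<alpha> vnorm_zero_iff[of \<alpha>] by auto
  then have pos: "(vnorm ?x)^2 > 0" using nx\<alpha> vnorm_nonneg[of \<alpha>] by simp
  have "a k * (vnorm ?x)^2 \<le> Re (cinner (A *\<^sub>v ?x) ?x)"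
    using rayleigh_lower[OF DA sa k \<alpha> supp\<alpha>] nx\<alpha> by simp
  also have "\<dots> \<le> Re (cinner (B *\<^sub>v ?x) ?x) + d * (vnorm ?x)^2"
    using H[OF mult_mat_vec_carrier[OF Uc \<alpha>]] by simp
  also have "Re (cinner (B *\<^sub>v ?x) ?x) \<le> b k * (vnorm ?x)^2"
    using rayleigh_upper[OF DB sb k \<beta> supp\<beta>] nx\<beta> x by simp
  finally have "a k * (vnorm ?x)^2 \<le> (b k + d) * (vnorm ?x)^2" by (simp add: algebra_simps)
  then show ?thesis using pos by simp
qed

theorem weyl_inequality:
  assumes DA: "unitary_diag n A U a" and sa: "sorted_desc n a"
    and DB: "unitary_diag n B V b" and sb: "sorted_desc n b" and k: "k < n"
  shows "\<bar>a k - b k\<bar> \<le> op_norm (A - B)"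
proof -
  have A: "A \<in> carrier_mat n n" and B: "B \<in> carrier_mat n n"
    using DA DB by (auto simp: unitary_diag_def)
  note bound = quadratic_form_diff_bound[OF A B]
  have "a k \<le> b k + op_norm (A - B)"
    by (rule weyl_one_sided[OF DA sa DB sb _ k]) (use bound in fastforce)
  moreover have "b k \<le> a k + op_norm (A - B)"
    by (rule weyl_one_sided[OF DB sb DA sa _ k]) (use bound in fastforce)
  ultimately show ?thesis by linarith
qed

lemma prod_abs_le_power:
  fixes f :: "nat \<Rightarrow> real"
  assumes "\<And>i. i \<in> A \<Longrightarrow> \<bar>f i\<bar> \<le> x"
  shows "\<bar>prod f A\<bar> \<le> x ^ card A"
proof -
  have "\<bar>prod f A\<bar> = (\<Prod>i\<in>A. \<bar>f i\<bar>)" by (simp add: abs_prod)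
  also have "\<dots> \<le> (\<Prod>i\<in>A. x)" by (rule prod_mono) (use assms in auto)
  finally show ?thesis by simp
qed

lemma prod_diff_bound:
  fixes f g :: "nat \<Rightarrow> real"
  assumes "\<And>i. i < n \<Longrightarrow> \<bar>f i\<bar> \<le> x" "\<And>i. i < n \<Longrightarrow> \<bar>g i\<bar> \<le> y"
    "\<And>i. i < n \<Longrightarrow> \<bar>f i - g i\<bar> \<le> d"
  shows "\<bar>(\<Prod>i<n. f i) - (\<Prod>i<n. g i)\<bar> \<le> d * (\<Sum>i<n. x ^ i * y ^ (n - 1 - i))"
  using assms
proof (induction n)
  case 0
  then show ?case by simp
next
  case (Suc n)
  have y0: "0 \<le> y" and d0: "0 \<le> d" using Suc.prems(2,3)[of n] by auto
  have IH: "\<bar>(\<Prod>i<n. f i) - (\<Prod>i<n. g i)\<bar> \<le> d * (\<Sum>i<n. x ^ i * y ^ (n - 1 - i))"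
    using Suc by simp
  have pf: "\<bar>\<Prod>i<n. f i\<bar> \<le> x ^ n" using prod_abs_le_power[of "{..<n}" f x] Suc.prems(1) by simp
  have "(\<Prod>i<Suc n. f i) - (\<Prod>i<Suc n. g i)
      = (\<Prod>i<n. f i) * (f n - g n) + ((\<Prod>i<n. f i) - (\<Prod>i<n. g i)) * g n"
    by (simp add: algebra_simps)
  then have "\<bar>(\<Prod>i<Suc n. f i) - (\<Prod>i<Suc n. g i)\<bar>
      \<le> \<bar>\<Prod>i<n. f i\<bar> * \<bar>f n - g n\<bar> + \<bar>(\<Prod>i<n. f i) - (\<Prod>i<n. g i)\<bar> * \<bar>g n\<bar>"
    by (metis abs_mult abs_triangle_ineq)
  also have "\<dots> \<le> x ^ n * d + (d * (\<Sum>i<n. x ^ i * y ^ (n - 1 - i))) * y"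
    by (intro add_mono mult_mono) (use pf IH Suc.prems y0 d0 in auto)
  also have "\<dots> = d * (x ^ n + (\<Sum>i<n. x ^ i * (y ^ (n - 1 - i) * y)))"
    by (simp add: algebra_simps sum_distrib_left sum_distrib_right)
  also have "(\<Sum>i<n. x ^ i * (y ^ (n - 1 - i) * y)) = (\<Sum>i<n. x ^ i * y ^ (Suc n - 1 - i))"
    by (intro sum.cong refl) (simp add: Suc_diff_Suc flip: power_Suc2)
  also have "x ^ n + \<dots> = (\<Sum>i<Suc n. x ^ i * y ^ (Suc n - 1 - i))" by simp
  finally show ?case .
qed

lemma prod_small_factor_bound:
  fixes f :: "nat \<Rightarrow> real"
  assumes "\<And>i. i < n \<Longrightarrow> \<bar>f i\<bar> \<le> x" and k: "k < n" and fk: "\<bar>f k\<bar> \<le> d"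
  shows "\<bar>\<Prod>i<n. f i\<bar> \<le> d * x ^ (n - 1)"
proof -
  have "(\<Prod>i<n. f i) = f k * (\<Prod>i\<in>{..<n} - {k}. f i)"
    using k by (intro prod.remove) auto
  then have "\<bar>\<Prod>i<n. f i\<bar> = \<bar>f k\<bar> * \<bar>\<Prod>i\<in>{..<n} - {k}. f i\<bar>" by (simp add: abs_mult)
  also have "\<dots> \<le> d * x ^ card ({..<n} - {k})"
    by (intro mult_mono prod_abs_le_power) (use assms in auto)
  also have "card ({..<n} - {k}) = n - 1" using k by simp
  finally show ?thesis .
qed

lemma indicator_prod_diff_bound:
  fixes a b :: "nat \<Rightarrow> real" and s t :: real
  assumes s: "s = 0 \<or> s = 1" and t: "t = 0 \<or> t = 1"
    and a_bound: "\<And>i. i < n \<Longrightarrow> \<bar>a i\<bar> \<le> x" and b_bound: "\<And>i. i < n \<Longrightarrow> \<bar>b i\<bar> \<le> y"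
    and ab: "\<And>i. i < n \<Longrightarrow> \<bar>a i - b i\<bar> \<le> d"
    and switch: "s \<noteq> t \<Longrightarrow> \<exists>k<n. \<bar>a k\<bar> \<le> d \<and> \<bar>b k\<bar> \<le> d"
  shows "\<bar>s * (\<Prod>i<n. a i) - t * (\<Prod>i<n. b i)\<bar> \<le> d * (\<Sum>i<n. x ^ i * y ^ (n - 1 - i))"
proof (cases "s = t")
  case True
  then have "\<bar>s * (\<Prod>i<n. a i) - t * (\<Prod>i<n. b i)\<bar> \<le> \<bar>(\<Prod>i<n. a i) - (\<Prod>i<n. b i)\<bar>"
    using s by auto
  also have "\<dots> \<le> d * (\<Sum>i<n. x ^ i * y ^ (n - 1 - i))" by (rule prod_diff_bound[OF a_bound b_bound ab])
  finally show ?thesis .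
next
  case False
  then obtain k where k: "k < n" and ak: "\<bar>a k\<bar> \<le> d" and bk: "\<bar>b k\<bar> \<le> d" using switch by blast
  have x0: "0 \<le> x" and y0: "0 \<le> y" and d0: "0 \<le> d" using a_bound[OF k] b_bound[OF k] ak by auto
  have term_le_sum: "d * (x ^ i * y ^ (n - 1 - i)) \<le> d * (\<Sum>i<n. x ^ i * y ^ (n - 1 - i))" if "i < n" for i
    by (intro mult_left_mono member_le_sum) (use that x0 y0 d0 in auto)
  have "\<bar>\<Prod>i<n. a i\<bar> \<le> d * (\<Sum>i<n. x ^ i * y ^ (n - 1 - i))"
    using prod_small_factor_bound[of n a, OF a_bound k ak] term_le_sum[of "n - 1"] k by simp
  moreover have "\<bar>\<Prod>i<n. b i\<bar> \<le> d * (\<Sum>i<n. x ^ i * y ^ (n - 1 - i))"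
    using prod_small_factor_bound[of n b, OF b_bound k bk] term_le_sum[of 0] k by simp
  ultimately show ?thesis using s t False by auto
qed

lemma sig_ind_unitary_diag:
  assumes "unitary_diag n A U a"
  shows "sig_ind n A q = (if q \<le> n \<and> card {i. i < n \<and> a i > 0} = n - q
                            \<and> card {i. i < n \<and> a i < 0} = q then 1 else 0)"
  using unitary_diag_eigenvalue_counts[OF assms] by (simp add: sig_ind_def)

lemma sig_ind_change_small_eigenvalue:
  assumes DA: "unitary_diag n A U a" and DB: "unitary_diag n B V b"
    and close: "\<And>k. k < n \<Longrightarrow> \<bar>a k - b k\<bar> \<le> d"
    and change: "sig_ind n A q \<noteq> sig_ind n B q"
  shows "\<exists>k<n. \<bar>a k\<bar> \<le> d \<and> \<bar>b k\<bar> \<le> d"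
proof (rule ccontr)
  assume "\<not> ?thesis"
  then have "(a k > 0 \<longleftrightarrow> b k > 0) \<and> (a k < 0 \<longleftrightarrow> b k < 0)" if "k < n" for k
    using close[OF that] that by force
  then have "{i. i < n \<and> a i > 0} = {i. i < n \<and> b i > 0}"
    and "{i. i < n \<and> a i < 0} = {i. i < n \<and> b i < 0}" by auto
  then show False using change by (simp add: sig_ind_unitary_diag[OF DA] sig_ind_unitary_diag[OF DB])
qed

theorem lemma2p25:
  fixes n q :: nat and A B :: "complex mat"
  assumes "hermitian_mat n A" and "hermitian_mat n B"
  shows "cmod (complex_of_real (sig_ind n A q) * det A - complex_of_real (sig_ind n B q) * det B)
         \<le> op_norm (A - B) * (\<Sum>i<n. op_norm A ^ i * op_norm B ^ (n - 1 - i))"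
proof -
  obtain U a where DA: "unitary_diag n A U a" and sa: "sorted_desc n a"
    using spectral_theorem[OF assms(1)] by blast
  obtain V b where DB: "unitary_diag n B V b" and sb: "sorted_desc n b"
    using spectral_theorem[OF assms(2)] by blast
  have close: "\<And>k. k < n \<Longrightarrow> \<bar>a k - b k\<bar> \<le> op_norm (A - B)"
    by (rule weyl_inequality[OF DA sa DB sb])
  have "cmod (complex_of_real (sig_ind n A q) * det A - complex_of_real (sig_ind n B q) * det B)
      = \<bar>sig_ind n A q * (\<Prod>i<n. a i) - sig_ind n B q * (\<Prod>i<n. b i)\<bar>"
    unfolding unitary_diag_det[OF DA] unitary_diag_det[OF DB]
    by (metis norm_of_real of_real_diff of_real_mult)
  also have "\<dots> \<le> op_norm (A - B) * (\<Sum>i<n. op_norm A ^ i * op_norm B ^ (n - 1 - i))"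
    by (rule indicator_prod_diff_bound)
      (use unitary_diag_eigenvalue_bound[OF DA] unitary_diag_eigenvalue_bound[OF DB] close
        sig_ind_change_small_eigenvalue[OF DA DB close] in \<open>auto simp: sig_ind_def\<close>)
  finally show ?thesis .
qed

end
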